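(* Let $k$ be a positive integer and let $G=G_1*_k G_2$ where, for each $i=1,2$, either $G_i=K_1$ or $\tau(G_i)=\overline{\tau}(G_i)=\kappa'(G_i)=\overline{\kappa'}(G_i)=k$. Then $\tau(G)=\overline{\tau}(G)=\kappa'(G)=\overline{\kappa'}(G)=k$.
   Context: Graphs are finite, loopless, possibly with multiple edges. $\kappa'(G)$ is the edge connectivity; $\tau(G)$ is the maximum number of edge-disjoint spanning trees of a connected graph $G$ ($\tau(K_1)=\infty$). $\overline{\kappa'}(G)=\max\{\kappa'(H): H\subseteq G\}$ and $\overline{\tau}(G)=\max\{\tau(H): H\subseteq G\}$, maxima over subgraphs. For vertex-disjoint connected graphs $G_1,G_2$ and a set $K$ of $k$ edges each having one end in $V(G_1)$ and the other in $V(G_2)$, the $k$-edge-join $G_1*_k G_2$ is the graph with vertex set $V(G_1)\cup V(G_2)$ and edge set $E(G_1)\cup E(G_2)\cup K$. *)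

theory Defs
  imports Main "HOL-Library.Extended_Nat"
begin

text \<open>Multigraphs: a global incidence map inc assigns to each edge its ordered pair of
ends; a graph is a pair (V, E) of a vertex set and an edge set.\<close>

type_synonym ('v,'e) graph = "'v set \<times> 'e set"

definition wf_graph :: "('e \<Rightarrow> 'v \<times> 'v) \<Rightarrow> ('v,'e) graph \<Rightarrow> bool" where
  "wf_graph inc G \<longleftrightarrow> finite (fst G) \<and> finite (snd G) \<and>
     (\<forall>e\<in>snd G. fst (inc e) \<in> fst G \<and> snd (inc e) \<in> fst G \<and> fst (inc e) \<noteq> snd (inc e))"

definition adj :: "('e \<Rightarrow> 'v \<times> 'v) \<Rightarrow> 'e set \<Rightarrow> ('v \<times> 'v) set" where
  "adj inc E = {(u,v). \<exists>e\<in>E. inc e = (u,v) \<or> inc e = (v,u)}"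

definition connected_graph :: "('e \<Rightarrow> 'v \<times> 'v) \<Rightarrow> ('v,'e) graph \<Rightarrow> bool" where
  "connected_graph inc G \<longleftrightarrow> fst G \<noteq> {} \<and>
     (\<forall>u\<in>fst G. \<forall>v\<in>fst G. (u,v) \<in> (adj inc (snd G))\<^sup>*)"

definition spanning_tree :: "('e \<Rightarrow> 'v \<times> 'v) \<Rightarrow> ('v,'e) graph \<Rightarrow> 'e set \<Rightarrow> bool" where
  "spanning_tree inc G T \<longleftrightarrow> T \<subseteq> snd G \<and> connected_graph inc (fst G, T) \<and>
     (\<forall>T'. T' \<subset> T \<longrightarrow> \<not> connected_graph inc (fst G, T'))"

text \<open>Maximum number of edge-disjoint spanning trees (infinite for K_1).\<close>
definition tau :: "('e \<Rightarrow> 'v \<times> 'v) \<Rightarrow> ('v,'e) graph \<Rightarrow> enat" where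
  "tau inc G = Sup {enat k | k. \<exists>f :: nat \<Rightarrow> 'e set.
      (\<forall>i<k. spanning_tree inc G (f i)) \<and> (\<forall>i<k. \<forall>j<k. i \<noteq> j \<longrightarrow> f i \<inter> f j = {})}"

definition kappa' :: "('e \<Rightarrow> 'v \<times> 'v) \<Rightarrow> ('v,'e) graph \<Rightarrow> enat" where
  "kappa' inc G = Inf {enat (card S) | S. S \<subseteq> snd G \<and> \<not> connected_graph inc (fst G, snd G - S)}"

definition subgraph :: "('e \<Rightarrow> 'v \<times> 'v) \<Rightarrow> ('v,'e) graph \<Rightarrow> ('v,'e) graph \<Rightarrow> bool" where
  "subgraph inc H G \<longleftrightarrow> fst H \<subseteq> fst G \<and> snd H \<subseteq> snd G \<and>
     (\<forall>e\<in>snd H. fst (inc e) \<in> fst H \<and> snd (inc e) \<in> fst H)"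

definition tau_bar :: "('e \<Rightarrow> 'v \<times> 'v) \<Rightarrow> ('v,'e) graph \<Rightarrow> enat" where
  "tau_bar inc G = Sup {tau inc H | H. subgraph inc H G \<and> connected_graph inc H \<and> 2 \<le> card (fst H)}"

definition kappa'_bar :: "('e \<Rightarrow> 'v \<times> 'v) \<Rightarrow> ('v,'e) graph \<Rightarrow> enat" where
  "kappa'_bar inc G = Sup {kappa' inc H | H. subgraph inc H G \<and> 2 \<le> card (fst H)}"

definition is_K1 :: "('v,'e) graph \<Rightarrow> bool" where
  "is_K1 G \<longleftrightarrow> card (fst G) = 1 \<and> snd G = {}"

definition edge_join :: "('e \<Rightarrow> 'v \<times> 'v) \<Rightarrow> nat \<Rightarrow> ('v,'e) graph \<Rightarrow> ('v,'e) graph \<Rightarrow> 'e set \<Rightarrow> ('v,'e) graph \<Rightarrow> bool" where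
  "edge_join inc k G1 G2 K G \<longleftrightarrow>
     wf_graph inc G1 \<and> wf_graph inc G2 \<and> connected_graph inc G1 \<and> connected_graph inc G2 \<and>
     fst G1 \<inter> fst G2 = {} \<and> finite K \<and> card K = k \<and>
     K \<inter> snd G1 = {} \<and> K \<inter> snd G2 = {} \<and>
     (\<forall>e\<in>K. (fst (inc e) \<in> fst G1 \<and> snd (inc e) \<in> fst G2) \<or>
              (fst (inc e) \<in> fst G2 \<and> snd (inc e) \<in> fst G1)) \<and>
     G = (fst G1 \<union> fst G2, snd G1 \<union> snd G2 \<union> K)"

end

(* Gluing the i-th spanning trees of G1 and G2 with the i-th join edge gives k edge-disjoint
   connected spanning subgraphs of G, so k <= tau G. Conversely, a subgraph H of G with at least
   two vertices either lies inside one G_i, where kappa' H <= kappa'_bar G_i = k, or meets both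
   sides and is disconnected by deleting its at most k join edges; so kappa'_bar G <= k. As k
   disjoint spanning trees must each meet every edge cut, tau <= kappa', and the chains
     k <= tau G <= kappa' G <= kappa'_bar G <= k,   tau G <= tau_bar G <= kappa'_bar G
   close up. *)
theory Submission
  imports Defs
begin

lemma adj_mono: "E \<subseteq> F \<Longrightarrow> adj inc E \<subseteq> adj inc F"
  unfolding adj_def by blast

lemma sym_adj: "sym (adj inc E)"
  unfolding adj_def sym_def by blast

lemma connected_graph_mono:
  assumes "connected_graph inc (V, E)" "E \<subseteq> F"
  shows "connected_graph inc (V, F)"
  using assms(1) rtrancl_mono[OF adj_mono[OF assms(2), of inc]] unfolding connected_graph_def by auto

lemma connected_graph_singleton: "card V = 1 \<Longrightarrow> connected_graph inc (V, E)"
  unfolding connected_graph_def by (auto simp: card_1_singleton_iff)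

lemma connected_graph_Un_bridge:
  assumes A: "connected_graph inc (A, F1)" and B: "connected_graph inc (B, F2)"
    and ab: "(a, b) \<in> adj inc {e}" "a \<in> A" "b \<in> B"
  shows "connected_graph inc (A \<union> B, F1 \<union> F2 \<union> {e})"
proof -
  let ?R = "(adj inc (F1 \<union> F2 \<union> {e}))\<^sup>*"
  have R1: "(adj inc F1)\<^sup>* \<subseteq> ?R" and R2: "(adj inc F2)\<^sup>* \<subseteq> ?R"
    by (intro rtrancl_mono adj_mono; blast)+
  have ba: "(b, a) \<in> adj inc (F1 \<union> F2 \<union> {e})"
    using adj_mono[of "{e}" "F1 \<union> F2 \<union> {e}" inc] symD[OF sym_adj ab(1)] by blast
  have to_a: "(x, a) \<in> ?R" if "x \<in> A \<union> B" for x
  proof (cases "x \<in> A")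
    case True
    then show ?thesis using A ab(2) R1 unfolding connected_graph_def by auto
  next
    case False
    then have "(x, b) \<in> ?R" using B ab(3) that R2 unfolding connected_graph_def by auto
    then show ?thesis using ba by (rule rtrancl_into_rtrancl)
  qed
  have "(x, y) \<in> ?R" if "x \<in> A \<union> B" "y \<in> A \<union> B" for x y
  proof -
    have "(a, y) \<in> ?R" using symD[OF sym_rtrancl[OF sym_adj] to_a[OF that(2)]] .
    then show ?thesis using to_a[OF that(1)] by (rule rtrancl_trans[rotated])
  qed
  then show ?thesis
    using ab(2) unfolding connected_graph_def by auto
qed

lemma adj_rtrancl_closed:
  assumes "\<forall>e\<in>E. fst (inc e) \<in> A \<longleftrightarrow> snd (inc e) \<in> A"
    and "(u, v) \<in> (adj inc E)\<^sup>*" "u \<in> A"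
  shows "v \<in> A"
  using assms(2,3)
proof (induction rule: rtrancl_induct)
  case (step y z)
  then show ?case using assms(1) unfolding adj_def by force
qed simp

text \<open>Connected spanning edge sets rather than spanning trees: each contains a spanning tree, and
  unlike trees they can be glued across an edge join without checking minimality.\<close>

definition connectors :: "('e \<Rightarrow> 'v \<times> 'v) \<Rightarrow> ('v,'e) graph \<Rightarrow> nat \<Rightarrow> (nat \<Rightarrow> 'e set) \<Rightarrow> bool" where
  "connectors inc G k f \<longleftrightarrow>
     (\<forall>i<k. f i \<subseteq> snd G \<and> connected_graph inc (fst G, f i)) \<and>
     (\<forall>i<k. \<forall>j<k. i \<noteq> j \<longrightarrow> f i \<inter> f j = {})"

lemma spanning_tree_exists:
  assumes "finite T" "connected_graph inc (V, T)" "T \<subseteq> E"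
  shows "\<exists>T'\<subseteq>T. spanning_tree inc (V, E) T'"
proof -
  obtain T' where T': "T' \<subseteq> T" "connected_graph inc (V, T')"
    and least: "\<forall>T''. T'' \<subseteq> T \<and> connected_graph inc (V, T'') \<longrightarrow> card T' \<le> card T''"
    using ex_has_least_nat[of "\<lambda>T'. T' \<subseteq> T \<and> connected_graph inc (V, T')" T card] assms(2)
    by blast
  have "\<not> connected_graph inc (V, T'')" if "T'' \<subset> T'" for T''
  proof
    assume "connected_graph inc (V, T'')"
    then have "card T' \<le> card T''" using least that T'(1) by blast
    moreover have "card T'' < card T'"
      using psubset_card_mono[OF finite_subset[OF T'(1) assms(1)] that] .
    ultimately show False by simp
  qed
  then show ?thesis
    using T' assms(3) unfolding spanning_tree_def by auto
qed

lemma tau_ge_if_connectors: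
  assumes "finite (snd G)" "connectors inc G k f"
  shows "enat k \<le> tau inc G"
proof -
  have "\<exists>T\<subseteq>f i. spanning_tree inc G T" if "i < k" for i
  proof -
    have "f i \<subseteq> snd G" "connected_graph inc (fst G, f i)"
      using assms(2) that unfolding connectors_def by auto
    then show ?thesis
      using spanning_tree_exists[of "f i" inc "fst G" "snd G"] finite_subset[OF _ assms(1)] by auto
  qed
  then obtain g where g: "\<forall>i<k. g i \<subseteq> f i \<and> spanning_tree inc G (g i)" by metis
  then have "\<forall>i<k. \<forall>j<k. i \<noteq> j \<longrightarrow> g i \<inter> g j = {}"
    using assms(2) unfolding connectors_def by blast
  then show ?thesis
    unfolding tau_def using g by (intro Sup_upper) blast
qed

lemma Sup_enat_in: "A \<noteq> {} \<Longrightarrow> Sup A \<noteq> \<infinity> \<Longrightarrow> Sup A \<in> (A :: enat set)"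
  unfolding Sup_enat_def by (auto split: if_splits)

lemma connectors_if_tau_eq:
  fixes inc :: "'e \<Rightarrow> 'v \<times> 'v"
  assumes "tau inc G = enat k" "0 < k"
  shows "\<exists>f. connectors inc G k f"
proof -
  let ?A = "{enat n | n. \<exists>f :: nat \<Rightarrow> 'e set. (\<forall>i<n. spanning_tree inc G (f i)) \<and>
                          (\<forall>i<n. \<forall>j<n. i \<noteq> j \<longrightarrow> f i \<inter> f j = {})}"
  have A: "Sup ?A = enat k" using assms(1) by (simp only: tau_def)
  moreover have "?A \<noteq> {}"
  proof
    assume "?A = {}"
    then have "Sup ?A = 0" by (simp only: Sup_empty bot_enat_def)
    then show False using A assms(2) by (simp add: zero_enat_def)
  qed
  ultimately have "enat k \<in> ?A" using Sup_enat_in[of ?A] by simp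
  then obtain f :: "nat \<Rightarrow> 'e set" where "\<forall>i<k. spanning_tree inc G (f i)"
    and "\<forall>i<k. \<forall>j<k. i \<noteq> j \<longrightarrow> f i \<inter> f j = {}"
    by auto
  then have "connectors inc G k f"
    unfolding connectors_def spanning_tree_def by simp
  then show ?thesis by blast
qed

lemma connectors_K1: "is_K1 G \<Longrightarrow> connectors inc G k (\<lambda>_. {})"
  unfolding connectors_def is_K1_def by (simp add: connected_graph_singleton)

lemma trees_le_cut:
  assumes "finite (snd H)" and trees: "\<forall>i<n. spanning_tree inc H (f i)"
    and disj: "\<forall>i<n. \<forall>j<n. i \<noteq> j \<longrightarrow> f i \<inter> f j = {}"
    and cut: "S \<subseteq> snd H" "\<not> connected_graph inc (fst H, snd H - S)"
  shows "n \<le> card S"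
proof -
  have "f i \<inter> S \<noteq> {}" if "i < n" for i
  proof
    assume "f i \<inter> S = {}"
    then have "f i \<subseteq> snd H - S" using trees that unfolding spanning_tree_def by blast
    moreover have "connected_graph inc (fst H, f i)" using trees that unfolding spanning_tree_def by blast
    ultimately show False using connected_graph_mono[of inc "fst H" "f i"] cut(2) by blast
  qed
  then have "\<forall>i<n. \<exists>s. s \<in> f i \<inter> S" by blast
  then obtain g where g: "\<forall>i<n. g i \<in> f i \<inter> S" by metis
  have "inj_on g {..<n}"
  proof (rule inj_onI)
    fix i j assume ij: "i \<in> {..<n}" "j \<in> {..<n}" "g i = g j"
    then have "g i \<in> f i \<inter> f j" using g by auto
    then show "i = j" using disj ij by blast
  qed
  moreover have "g ` {..<n} \<subseteq> S" using g by auto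
  ultimately have "card {..<n} \<le> card S"
    using card_inj_on_le finite_subset[OF cut(1) assms(1)] by blast
  then show ?thesis by simp
qed

lemma tau_le_kappa': "finite (snd H) \<Longrightarrow> tau inc H \<le> kappa' inc H"
  unfolding tau_def kappa'_def
  by (intro Sup_least Inf_greatest) (auto dest: trees_le_cut)

lemma kappa'_le_card_cut:
  "S \<subseteq> snd H \<Longrightarrow> \<not> connected_graph inc (fst H, snd H - S) \<Longrightarrow> kappa' inc H \<le> enat (card S)"
  unfolding kappa'_def by (rule Inf_lower) blast

lemma subgraph_refl: "wf_graph inc G \<Longrightarrow> subgraph inc G G"
  unfolding wf_graph_def subgraph_def by blast

lemma tau_le_tau_bar:
  "subgraph inc H G \<Longrightarrow> connected_graph inc H \<Longrightarrow> 2 \<le> card (fst H) \<Longrightarrow> tau inc H \<le> tau_bar inc G"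
  unfolding tau_bar_def by (rule Sup_upper) blast

lemma kappa'_le_kappa'_bar:
  "subgraph inc H G \<Longrightarrow> 2 \<le> card (fst H) \<Longrightarrow> kappa' inc H \<le> kappa'_bar inc G"
  unfolding kappa'_bar_def by (rule Sup_upper) blast

lemma tau_bar_le_kappa'_bar:
  assumes "finite (snd G)"
  shows "tau_bar inc G \<le> kappa'_bar inc G"
  unfolding tau_bar_def
proof (rule Sup_least, clarify)
  fix H assume H: "subgraph inc H G" "2 \<le> card (fst H)"
  then have "finite (snd H)"
    using assms finite_subset unfolding subgraph_def by blast
  then have "tau inc H \<le> kappa' inc H" by (rule tau_le_kappa')
  also have "\<dots> \<le> kappa'_bar inc G" using H by (rule kappa'_le_kappa'_bar)
  finally show "tau inc H \<le> kappa'_bar inc G" .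
qed

lemma not_is_K1_if_subgraph:
  assumes "finite (fst G)" "subgraph inc H G" "2 \<le> card (fst H)"
  shows "\<not> is_K1 G"
proof -
  have "card (fst H) \<le> card (fst G)"
    using assms(1,2) card_mono unfolding subgraph_def by blast
  then show ?thesis using assms(3) unfolding is_K1_def by simp
qed

lemma edge_join_sym: "edge_join inc k G1 G2 K G \<Longrightarrow> edge_join inc k G2 G1 K G"
  unfolding edge_join_def by (auto simp: Un_ac)

lemma edge_join_wf_graph:
  assumes "edge_join inc k G1 G2 K G"
  shows "wf_graph inc G"
proof -
  have wf: "wf_graph inc G1" "wf_graph inc G2" and disj: "fst G1 \<inter> fst G2 = {}"
    and K: "finite K" "\<forall>e\<in>K. (fst (inc e) \<in> fst G1 \<and> snd (inc e) \<in> fst G2) \<or>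
              (fst (inc e) \<in> fst G2 \<and> snd (inc e) \<in> fst G1)"
    and G: "G = (fst G1 \<union> fst G2, snd G1 \<union> snd G2 \<union> K)"
    using assms unfolding edge_join_def by blast+
  have "\<forall>e\<in>snd G1 \<union> snd G2 \<union> K. fst (inc e) \<in> fst G1 \<union> fst G2 \<and>
      snd (inc e) \<in> fst G1 \<union> fst G2 \<and> fst (inc e) \<noteq> snd (inc e)"
    using wf disj K(2) unfolding wf_graph_def by (metis (no_types, lifting) IntI Un_iff empty_iff)
  then show ?thesis
    using wf K(1) unfolding wf_graph_def G by simp
qed

lemma edge_join_card_vertices:
  assumes "edge_join inc k G1 G2 K G"
  shows "2 \<le> card (fst G)"
proof -
  have fin: "finite (fst G1)" "finite (fst G2)" and ne: "fst G1 \<noteq> {}" "fst G2 \<noteq> {}"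
    using assms unfolding edge_join_def wf_graph_def connected_graph_def by blast+
  have "card (fst G) = card (fst G1) + card (fst G2)"
    using assms fin card_Un_disjoint unfolding edge_join_def by fastforce
  moreover have "0 < card (fst G1)" "0 < card (fst G2)"
    using fin ne by (simp_all add: card_gt_0_iff)
  ultimately show ?thesis by simp
qed

lemma edge_join_edges_disjoint: "edge_join inc k G1 G2 K G \<Longrightarrow> snd G1 \<inter> snd G2 = {}"
  unfolding edge_join_def wf_graph_def by blast

lemma edge_join_bridge:
  assumes "edge_join inc k G1 G2 K G" "e \<in> K"
  shows "\<exists>a\<in>fst G1. \<exists>b\<in>fst G2. (a, b) \<in> adj inc {e}"
proof -
  have "fst (inc e) \<in> fst G1 \<and> snd (inc e) \<in> fst G2 \<or> fst (inc e) \<in> fst G2 \<and> snd (inc e) \<in> fst G1"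
    using assms unfolding edge_join_def by blast
  then show ?thesis
    unfolding adj_def by (cases "inc e") force
qed

lemma connectors_edge_join:
  assumes ej: "edge_join inc k G1 G2 K G"
    and f1: "connectors inc G1 k f1" and f2: "connectors inc G2 k f2"
  shows "\<exists>f. connectors inc G k f"
proof -
  have K: "finite K" "card K = k" "K \<inter> snd G1 = {}" "K \<inter> snd G2 = {}"
    and G: "fst G = fst G1 \<union> fst G2" "snd G = snd G1 \<union> snd G2 \<union> K"
    using ej unfolding edge_join_def by auto
  obtain h where h: "bij_betw h {0..<k} K" using ex_bij_betw_nat_finite[OF K(1)] K(2) by blast
  then have hK: "h i \<in> K" if "i < k" for i using that bij_betwE by fastforce
  define f where "f i = f1 i \<union> f2 i \<union> {h i}" for i
  have "f i \<subseteq> snd G \<and> connected_graph inc (fst G, f i)" if i: "i < k" for i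
  proof
    have "f1 i \<subseteq> snd G1" "f2 i \<subseteq> snd G2" using f1 f2 i unfolding connectors_def by auto
    then show "f i \<subseteq> snd G" using hK[OF i] unfolding f_def G by blast
    obtain a b where "a \<in> fst G1" "b \<in> fst G2" "(a, b) \<in> adj inc {h i}"
      using edge_join_bridge[OF ej hK[OF i]] by blast
    moreover have "connected_graph inc (fst G1, f1 i)" "connected_graph inc (fst G2, f2 i)"
      using f1 f2 i unfolding connectors_def by auto
    ultimately show "connected_graph inc (fst G, f i)"
      unfolding f_def G(1) by (intro connected_graph_Un_bridge)
  qed
  moreover have "f i \<inter> f j = {}" if "i < k" "j < k" "i \<noteq> j" for i j
  proof -
    have "h i \<noteq> h j" using h that unfolding bij_betw_def inj_on_def by auto
    moreover have "f1 i \<inter> f1 j = {}" "f2 i \<inter> f2 j = {}"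
      using f1 f2 that unfolding connectors_def by auto
    moreover have "f1 i \<union> f1 j \<subseteq> snd G1" "f2 i \<union> f2 j \<subseteq> snd G2"
      using f1 f2 that unfolding connectors_def by auto
    ultimately show ?thesis
      using hK that K(3,4) edge_join_edges_disjoint[OF ej] unfolding f_def by blast
  qed
  ultimately show ?thesis unfolding connectors_def by blast
qed

lemma edge_join_subgraph_side:
  assumes ej: "edge_join inc k G1 G2 K G" and H: "subgraph inc H G" "fst H \<subseteq> fst G1"
  shows "subgraph inc H G1"
proof -
  have "e \<in> snd G1" if e: "e \<in> snd H" for e
  proof -
    have ends: "fst (inc e) \<in> fst G1" "snd (inc e) \<in> fst G1"
      using H e unfolding subgraph_def by auto
    have "e \<in> snd G1 \<union> snd G2 \<union> K"
      using H(1) e ej unfolding subgraph_def edge_join_def by auto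
    moreover have "e \<notin> snd G2" "e \<notin> K"
      using ends ej unfolding edge_join_def wf_graph_def by blast+
    ultimately show ?thesis by blast
  qed
  then show ?thesis using H unfolding subgraph_def by blast
qed

text \<open>A subgraph meeting both sides is disconnected by removing its join edges.\<close>

lemma kappa'_crossing_subgraph_le:
  assumes ej: "edge_join inc k G1 G2 K G" and H: "subgraph inc H G"
    and u: "u \<in> fst H \<inter> fst G1" and v: "v \<in> fst H \<inter> fst G2"
  shows "kappa' inc H \<le> enat k"
proof -
  have wf: "wf_graph inc G1" "wf_graph inc G2" and disj: "fst G1 \<inter> fst G2 = {}"
    and K: "finite K" "card K = k" and G: "snd G = snd G1 \<union> snd G2 \<union> K"
    using ej unfolding edge_join_def by auto
  have "fst (inc e) \<in> fst G1 \<longleftrightarrow> snd (inc e) \<in> fst G1" if e: "e \<in> snd H - snd H \<inter> K" for e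
  proof -
    have "e \<in> snd G1 \<or> e \<in> snd G2" using H e G unfolding subgraph_def by blast
    then show ?thesis using wf disj unfolding wf_graph_def by blast
  qed
  then have "(u, v) \<notin> (adj inc (snd H - snd H \<inter> K))\<^sup>*"
    using adj_rtrancl_closed[of "snd H - snd H \<inter> K" inc "fst G1" u v] u v disj by blast
  then have "\<not> connected_graph inc (fst H, snd H - snd H \<inter> K)"
    using u v unfolding connected_graph_def by auto
  then have "kappa' inc H \<le> enat (card (snd H \<inter> K))"
    by (intro kappa'_le_card_cut) auto
  also have "\<dots> \<le> enat k"
    using K card_mono[of K "snd H \<inter> K"] by simp
  finally show ?thesis .
qed

lemma kappa'_bar_edge_join_le:
  assumes ej: "edge_join inc k G1 G2 K G"
    and s1: "is_K1 G1 \<or> kappa'_bar inc G1 = enat k"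
    and s2: "is_K1 G2 \<or> kappa'_bar inc G2 = enat k"
  shows "kappa'_bar inc G \<le> enat k"
  unfolding kappa'_bar_def
proof (rule Sup_least, clarify)
  fix H assume H: "subgraph inc H G" "2 \<le> card (fst H)"
  have side: "kappa' inc H \<le> enat k"
    if ej': "edge_join inc k G1' G2' K G" and s: "is_K1 G1' \<or> kappa'_bar inc G1' = enat k"
      and "fst H \<subseteq> fst G1'" for G1' G2'
  proof -
    have "subgraph inc H G1'" using edge_join_subgraph_side[OF ej' H(1)] that by blast
    moreover have "finite (fst G1')" using ej' unfolding edge_join_def wf_graph_def by blast
    ultimately show ?thesis
      using s H(2) not_is_K1_if_subgraph kappa'_le_kappa'_bar by metis
  qed
  have "fst H \<subseteq> fst G1 \<union> fst G2" using H ej unfolding subgraph_def edge_join_def by auto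
  then consider "fst H \<subseteq> fst G1" | "fst H \<subseteq> fst G2"
    | u v where "u \<in> fst H \<inter> fst G1" "v \<in> fst H \<inter> fst G2" by blast
  then show "kappa' inc H \<le> enat k"
    by cases (use side[OF ej s1] side[OF edge_join_sym[OF ej] s2]
        kappa'_crossing_subgraph_le[OF ej H(1)] in blast)+
qed

theorem lemma3p8:
  fixes inc :: "'e \<Rightarrow> 'v \<times> 'v" and k :: nat and G1 G2 G :: "('v,'e) graph" and K :: "'e set"
  assumes "0 < k"
    and "edge_join inc k G1 G2 K G"
    and "is_K1 G1 \<or> (tau inc G1 = enat k \<and> tau_bar inc G1 = enat k \<and>
                     kappa' inc G1 = enat k \<and> kappa'_bar inc G1 = enat k)"
    and "is_K1 G2 \<or> (tau inc G2 = enat k \<and> tau_bar inc G2 = enat k \<and>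
                     kappa' inc G2 = enat k \<and> kappa'_bar inc G2 = enat k)"
  shows "tau inc G = enat k \<and> tau_bar inc G = enat k \<and>
         kappa' inc G = enat k \<and> kappa'_bar inc G = enat k"
proof -
  note ej = assms(2)
  obtain f1 where "connectors inc G1 k f1"
    using assms(1,3) connectors_K1 connectors_if_tau_eq by metis
  moreover obtain f2 where "connectors inc G2 k f2"
    using assms(1,4) connectors_K1 connectors_if_tau_eq by metis
  ultimately obtain f where f: "connectors inc G k f"
    using connectors_edge_join[OF ej] by blast
  have wf: "wf_graph inc G" and finE: "finite (snd G)" and card: "2 \<le> card (fst G)"
    using edge_join_wf_graph[OF ej] edge_join_card_vertices[OF ej] by (auto simp: wf_graph_def)
  have conn: "connected_graph inc G"
    using f assms(1) connected_graph_mono[of inc "fst G" "f 0" "snd G"] unfolding connectors_def by simp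
  have "enat k \<le> tau inc G" using tau_ge_if_connectors[OF finE f] .
  moreover have "tau inc G \<le> kappa' inc G" using tau_le_kappa'[OF finE] .
  moreover have "kappa' inc G \<le> kappa'_bar inc G"
    using kappa'_le_kappa'_bar[OF subgraph_refl[OF wf] card] .
  moreover have "tau inc G \<le> tau_bar inc G"
    using tau_le_tau_bar[OF subgraph_refl[OF wf] conn card] .
  moreover have "tau_bar inc G \<le> kappa'_bar inc G" using tau_bar_le_kappa'_bar[OF finE] .
  moreover have "kappa'_bar inc G \<le> enat k"
    using kappa'_bar_edge_join_le[OF ej] assms(3,4) by blast
  ultimately show ?thesis by (meson antisym order_trans)
qed

end
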